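(* There exists an asymptotically dense infinite discrete set $\Lambda\subset[0,+\infty)$ such that for any open set $G\subset\mathbb{R}$ one can select a function $f_G\in C_0^+(\mathbb{R})$ such that $D(f_G,\Lambda)=G$.
   Context: For a discrete set $\Lambda\subset[0,\infty)$ and measurable $f:\mathbb{R}\to[0,+\infty)$, put $s(x)=\sum_{\lambda\in\Lambda}f(x+\lambda)$ and $D(f,\Lambda)=\{x\in\mathbb{R}: s(x)=\infty\}$. An unbounded infinite discrete set $\Lambda=\{\lambda_1<\lambda_2<\cdots\}$ is asymptotically dense if $\lambda_n-\lambda_{n-1}\to0$, equivalently, for every $a>0$, $\#(\Lambda\cap[x,x+a])\to\infty$ as $x\to\infty$. $C_0^+(\mathbb{R})$ denotes the set of continuous functions $\mathbb{R}\to[0,+\infty)$ tending to $0$ at $+\infty$. *)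

theory Defs
  imports "HOL-Analysis.Analysis"
begin

definition discrete_nonneg_set :: "real set \<Rightarrow> bool" where
  "discrete_nonneg_set L \<longleftrightarrow> L \<subseteq> {0..} \<and> (\<forall>a b. finite (L \<inter> {a..b}))"

definition asymp_dense :: "real set \<Rightarrow> bool" where
  "asymp_dense L \<longleftrightarrow> infinite L \<and> \<not> bdd_above L \<and>
     (\<forall>a>0. filterlim (\<lambda>x. card (L \<inter> {x..x+a})) at_top at_top)"

definition shift_sum :: "(real \<Rightarrow> real) \<Rightarrow> real set \<Rightarrow> real \<Rightarrow> ennreal" where
  "shift_sum f L x = (\<Sum>\<^sub>\<infinity>l\<in>L. ennreal (f (x + l)))"

definition divset :: "(real \<Rightarrow> real) \<Rightarrow> real set \<Rightarrow> real set" where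
  "divset f L = {x. shift_sum f L x = top}"

definition C0_plus :: "(real \<Rightarrow> real) set" where
  "C0_plus = {f. continuous_on UNIV f \<and> (\<forall>x. f x \<ge> 0) \<and> (f \<longlongrightarrow> 0) at_top}"

end

theory Submission
  imports Defs
begin

(* \<Lambda> is the set of square roots of naturals, which makes it asymptotically dense, together
   with clusters: at a_m = 4^(m+2) a cluster of K_m points inside an interval of length 1/K_m.
   For a 1-Lipschitz \<phi> with values in [0,1], f is a sum of disjoint bumps c_m \<phi>(y - a_m),
   each cut off at distance m+1 from a_m, with c_m = m / K_m.
   Shifting cluster m by x \<in> [-m, m] samples \<phi> near x, so the cluster contributes about
   K_m c_m \<phi>(x) = m \<phi>(x), which diverges if \<phi>(x) > 0. If \<phi>(x) = 0, the Lipschitz bound makes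
   each sample smaller than 1/K_m, so the cluster contributes at most c_m \<le> 2^-m, and the square
   roots contribute a convergent series because f(y) \<le> 2 / y^4.
   Hence D(f, \<Lambda>) = {\<phi> > 0}, which is G for \<phi> = min 1 (distance to the complement of G). *)

lemma infsum_ennreal_eq_topI:
  fixes h :: "'a \<Rightarrow> real"
  assumes "\<And>y. y \<in> L \<Longrightarrow> 0 \<le> h y"
    and "\<And>B. \<exists>F. finite F \<and> F \<subseteq> L \<and> B \<le> sum h F"
  shows "(\<Sum>\<^sub>\<infinity>y\<in>L. ennreal (h y)) = top"
proof (rule ccontr)
  assume "(\<Sum>\<^sub>\<infinity>y\<in>L. ennreal (h y)) \<noteq> top"
  then obtain r where r: "(\<Sum>\<^sub>\<infinity>y\<in>L. ennreal (h y)) = ennreal r" "0 \<le> r"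
    using ennreal_cases by (metis top.not_eq_extremum)
  obtain F where F: "finite F" "F \<subseteq> L" "r + 1 \<le> sum h F"
    using assms(2) by blast
  have "ennreal (sum h F) = (\<Sum>\<^sub>\<infinity>y\<in>F. ennreal (h y))"
    using F assms(1) by (auto intro!: sum_ennreal[symmetric])
  also have "\<dots> \<le> (\<Sum>\<^sub>\<infinity>y\<in>L. ennreal (h y))"
    using F by (intro infsum_mono_neutral) (auto intro: nonneg_summable_on_complete)
  finally have "sum h F \<le> r"
    using r by (auto simp: ennreal_le_iff2)
  then show False
    using F by linarith
qed

lemma infsum_ennreal_neq_topI:
  fixes h :: "'a \<Rightarrow> real"
  assumes "h summable_on L" "\<And>y. y \<in> L \<Longrightarrow> 0 \<le> h y"
  shows "(\<Sum>\<^sub>\<infinity>y\<in>L. ennreal (h y)) \<noteq> top"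
proof -
  have "(\<Sum>\<^sub>\<infinity>y\<in>L. ennreal (h y)) = ennreal (infsum h L)"
    using assms by (subst infsum_comm_additive_general[symmetric, where f = ennreal])
      (auto simp: o_def intro!: sum_ennreal continuous_intros)
  then show ?thesis
    by simp
qed

definition anchor :: "nat \<Rightarrow> real" where
  "anchor m = 4 ^ (m + 2)"

definition cluster_size :: "nat \<Rightarrow> nat" where
  "cluster_size m = m * 2 ^ m * (2 * 4 ^ (m + 2)) ^ 4"

definition height :: "nat \<Rightarrow> real" where
  "height m = real m / real (cluster_size m)"

lemma anchor_ge: "2 * real m + 2 \<le> anchor m"
proof -
  have "2 * real m + 2 \<le> 4 ^ (m + 1)"
    by (induction m) simp_all
  also have "(4::real) ^ (m + 1) \<le> 4 ^ (m + 2)"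
    by (rule power_increasing) auto
  finally show ?thesis
    by (simp add: anchor_def)
qed

lemma anchor_pos: "0 < anchor m"
  using anchor_ge[of m] by simp

lemma anchor_separated:
  assumes "m \<noteq> m'"
  shows "real m + real m' + 2 \<le> \<bar>anchor m - anchor m'\<bar>"
proof -
  have *: "real m + real m' + 2 \<le> anchor m' - anchor m" if "m < m'" for m m'
  proof -
    have "(4::real) ^ (m + 3) \<le> 4 ^ (m' + 2)"
      using that by (intro power_increasing) auto
    then have "4 * anchor m \<le> anchor m'"
      by (simp add: anchor_def power_add)
    then show ?thesis
      using anchor_ge[of m] anchor_ge[of m'] that by linarith
  qed
  show ?thesis
  proof (cases "m < m'")
    case True
    then show ?thesis
      using *[of m m'] by linarith
  next
    case False
    then have "m' < m"
      using assms by simp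
    then show ?thesis
      using *[of m' m] by linarith
  qed
qed

lemma real_cluster_size: "real (cluster_size m) = real m * 2 ^ m * (2 * anchor m) ^ 4"
  by (simp add: cluster_size_def anchor_def)

lemma cluster_size_ge: "real m \<le> real (cluster_size m)"
proof -
  have "1 \<le> (2 * anchor m) ^ 4"
    using anchor_ge[of m] by (intro one_le_power) simp
  then have "1 \<le> 2 ^ m * (2 * anchor m) ^ 4"
    by (metis mult_mono' one_le_numeral one_le_power mult_1 zero_le_one)
  then show ?thesis
    unfolding real_cluster_size by (simp add: mult.assoc mult_le_cancel_left1)
qed

lemma height_nonneg: "0 \<le> height m"
  by (simp add: height_def)

lemma height_times_cluster_size: "m \<ge> 1 \<Longrightarrow> height m * real (cluster_size m) = real m"
  using cluster_size_ge[of m] by (simp add: height_def)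

lemma height_le: "height m \<le> (1/2) ^ m / (2 * anchor m) ^ 4"
  using anchor_pos[of m] by (cases "m = 0") (simp_all add: height_def real_cluster_size field_simps)

lemma height_le_geometric: "height m \<le> (1/2) ^ m"
proof -
  have "1 \<le> (2 * anchor m) ^ 4"
    using anchor_ge[of m] by (intro one_le_power) simp
  then have "(1/2) ^ m / (2 * anchor m) ^ 4 \<le> ((1/2::real) ^ m)"
    by (simp add: divide_le_eq mult_le_cancel_left1)
  then show ?thesis
    using height_le[of m] by linarith
qed

definition plateau :: "nat \<Rightarrow> real \<Rightarrow> real" where
  "plateau m t = max 0 (min 1 (real m + 1 - \<bar>t\<bar>))"

definition bump :: "(real \<Rightarrow> real) \<Rightarrow> nat \<Rightarrow> real \<Rightarrow> real" where
  "bump \<phi> m y = height m * \<phi> (y - anchor m) * plateau m (y - anchor m)"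

(* bump \<phi> m vanishes on (-\<infinity>, m), so this finite sum is the sum of all bumps. *)
definition bump_sum :: "(real \<Rightarrow> real) \<Rightarrow> real \<Rightarrow> real" where
  "bump_sum \<phi> y = (\<Sum>m<nat \<lfloor>y\<rfloor> + 1. bump \<phi> m y)"

lemma plateau_bounds: "0 \<le> plateau m t" "plateau m t \<le> 1"
  by (auto simp: plateau_def)

lemma bump_eq_0: "real m + 1 \<le> \<bar>y - anchor m\<bar> \<Longrightarrow> bump \<phi> m y = 0"
  by (simp add: bump_def plateau_def)

lemma bump_eq_0_below: "y < real m \<Longrightarrow> bump \<phi> m y = 0"
  using anchor_ge[of m] by (intro bump_eq_0) auto

lemma bump_sum_eq:
  assumes "y < real N"
  shows "bump_sum \<phi> y = (\<Sum>m<N. bump \<phi> m y)"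
proof -
  have "(\<Sum>m<N. bump \<phi> m y) = (\<Sum>m\<in>{m. real m \<le> y}. bump \<phi> m y)" if "y < real N" for N
    by (rule sum.mono_neutral_right) (use that bump_eq_0_below in \<open>auto simp: not_le\<close>)
  from this[OF assms] this[of "nat \<lfloor>y\<rfloor> + 1"] show ?thesis
    unfolding bump_sum_def by linarith
qed

lemma continuous_on_bump_sum:
  assumes "continuous_on UNIV \<phi>"
  shows "continuous_on UNIV (bump_sum \<phi>)"
proof -
  have bump_cont: "continuous_on UNIV (bump \<phi> m)" for m
    unfolding bump_def plateau_def
    by (intro continuous_intros continuous_on_compose2[OF assms]) auto
  have "isCont (bump_sum \<phi>) y0" for y0
  proof -
    define N where "N = nat \<lfloor>y0\<rfloor> + 1"
    have "y0 < real N"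
      unfolding N_def by linarith
    then have "\<forall>\<^sub>F y in nhds y0. y \<in> {..<real N}"
      by (intro eventually_nhds_in_open) auto
    then have ev: "\<forall>\<^sub>F y in nhds y0. bump_sum \<phi> y = (\<Sum>m<N. bump \<phi> m y)"
      by eventually_elim (simp add: bump_sum_eq)
    moreover have "isCont (\<lambda>y. \<Sum>m<N. bump \<phi> m y) y0"
      using bump_cont by (intro isCont_sum) (simp add: continuous_on_eq_continuous_at)
    ultimately show ?thesis
      using isCont_cong[OF ev] by simp
  qed
  then show ?thesis
    by (intro continuous_at_imp_continuous_on) auto
qed

definition sqrt_nats :: "real set" where
  "sqrt_nats = range (\<lambda>k::nat. sqrt (real k))"

definition cluster :: "nat \<Rightarrow> real set" where
  "cluster m = (\<lambda>j. anchor m + real j / real (cluster_size m) ^ 2) ` {..<cluster_size m}"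

definition Lambda :: "real set" where
  "Lambda = sqrt_nats \<union> (\<Union>m. cluster m)"

lemma cluster_bounds:
  assumes "l \<in> cluster m"
  shows "1 \<le> real (cluster_size m)" "anchor m \<le> l" "l < anchor m + 1 / real (cluster_size m)"
proof -
  obtain j where j: "j < cluster_size m" "l = anchor m + real j / real (cluster_size m) ^ 2"
    using assms unfolding cluster_def by auto
  then show K: "1 \<le> real (cluster_size m)"
    by simp
  show "anchor m \<le> l"
    using j by simp
  have "real j / real (cluster_size m) ^ 2 < real (cluster_size m) / real (cluster_size m) ^ 2"
    using j K by (intro divide_strict_right_mono) auto
  then show "l < anchor m + 1 / real (cluster_size m)"
    using j K by (simp add: power2_eq_square)
qed

lemma cluster_subset: "cluster m \<subseteq> {anchor m..<anchor m + 1}"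
proof
  fix l assume l: "l \<in> cluster m"
  then have "1 / real (cluster_size m) \<le> 1"
    using cluster_bounds(1)[OF l] by simp
  then show "l \<in> {anchor m..<anchor m + 1}"
    using cluster_bounds(2,3)[OF l] by simp
qed

lemma finite_cluster: "finite (cluster m)"
  by (simp add: cluster_def)

lemma card_cluster: "card (cluster m) = cluster_size m"
  unfolding cluster_def by (subst card_image) (auto simp: inj_on_def)

lemma disjoint_family_cluster: "disjoint_family cluster"
  unfolding disjoint_family_on_def
proof (intro ballI impI)
  fix m m' :: nat
  assume "m \<noteq> m'"
  have "l \<notin> cluster m'" if "l \<in> cluster m" for l
  proof
    assume "l \<in> cluster m'"
    then have "anchor m \<le> l" "l < anchor m + 1" "anchor m' \<le> l" "l < anchor m' + 1"
      using cluster_subset[of m] cluster_subset[of m'] that by auto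
    then have "\<bar>anchor m - anchor m'\<bar> < 1"
      by (auto simp: abs_less_iff)
    then show False
      using anchor_separated[OF \<open>m \<noteq> m'\<close>] by linarith
  qed
  then show "cluster m \<inter> cluster m' = {}"
    by blast
qed

lemma Lambda_nonneg: "Lambda \<subseteq> {0..}"
proof
  fix l assume "l \<in> Lambda"
  then consider "l \<in> sqrt_nats" | m where "l \<in> cluster m"
    unfolding Lambda_def by blast
  then show "l \<in> {0..}"
  proof cases
    case 1
    then show ?thesis
      by (auto simp: sqrt_nats_def)
  next
    case (2 m)
    then show ?thesis
      using cluster_bounds(2)[of l m] anchor_pos[of m] by simp
  qed
qed

lemma finite_Lambda_Int: "finite (Lambda \<inter> {a..b})"
proof -
  have "sqrt_nats \<inter> {a..b} \<subseteq> (\<lambda>k::nat. sqrt (real k)) ` {..nat \<lceil>b\<^sup>2\<rceil>}"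
  proof
    fix l assume "l \<in> sqrt_nats \<inter> {a..b}"
    then obtain k where k: "l = sqrt (real k)" "sqrt (real k) \<le> b"
      by (auto simp: sqrt_nats_def)
    then have "real k \<le> b\<^sup>2"
      using real_le_rsqrt sqrt_le_D by blast
    then show "l \<in> (\<lambda>k::nat. sqrt (real k)) ` {..nat \<lceil>b\<^sup>2\<rceil>}"
      using k by (auto intro!: image_eqI[of _ _ k]) linarith
  qed
  then have "finite (sqrt_nats \<inter> {a..b})"
    by (rule finite_subset) simp
  moreover have "(\<Union>m. cluster m) \<inter> {a..b} \<subseteq> (\<Union>m\<le>nat \<lceil>b\<rceil>. cluster m)"
  proof
    fix l assume "l \<in> (\<Union>m. cluster m) \<inter> {a..b}"
    then obtain m where m: "l \<in> cluster m" "l \<le> b"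
      by auto
    then have "real m \<le> b"
      using cluster_bounds(2)[of l m] anchor_ge[of m] by linarith
    then show "l \<in> (\<Union>m\<le>nat \<lceil>b\<rceil>. cluster m)"
      using m by (auto intro!: bexI[of _ m]) linarith
  qed
  then have "finite ((\<Union>m. cluster m) \<inter> {a..b})"
    by (rule finite_subset) (simp add: finite_cluster)
  ultimately show ?thesis
    unfolding Lambda_def Int_Un_distrib2 by simp
qed

lemma discrete_Lambda: "discrete_nonneg_set Lambda"
  unfolding discrete_nonneg_set_def using Lambda_nonneg finite_Lambda_Int by blast

lemma card_Lambda_Int_ge:
  assumes "0 \<le> x" "0 < a"
  shows "2 * a * x - 1 \<le> real (card (Lambda \<inter> {x..x+a}))"
proof -
  define lo where "lo = nat \<lceil>x\<^sup>2\<rceil>"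
  define hi where "hi = nat \<lfloor>(x + a)\<^sup>2\<rfloor>"
  have "(\<lambda>k::nat. sqrt (real k)) ` {lo..hi} \<subseteq> Lambda \<inter> {x..x+a}"
  proof
    fix l assume "l \<in> (\<lambda>k::nat. sqrt (real k)) ` {lo..hi}"
    then obtain k where k: "l = sqrt (real k)" "lo \<le> k" "k \<le> hi"
      by auto
    moreover have "real hi \<le> (x + a)\<^sup>2"
      unfolding hi_def using of_int_floor_le[of "(x + a)\<^sup>2"] by simp
    ultimately have "x\<^sup>2 \<le> real k" "real k \<le> (x + a)\<^sup>2"
      unfolding lo_def by linarith+
    then have "x \<le> l" "l \<le> x + a"
      using k(1) assms real_le_rsqrt real_sqrt_le_iff[of "real k" "(x + a)\<^sup>2"] by auto
    then show "l \<in> Lambda \<inter> {x..x+a}"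
      using k by (auto simp: Lambda_def sqrt_nats_def)
  qed
  then have "card ((\<lambda>k::nat. sqrt (real k)) ` {lo..hi}) \<le> card (Lambda \<inter> {x..x+a})"
    by (intro card_mono finite_Lambda_Int)
  moreover have "card ((\<lambda>k::nat. sqrt (real k)) ` {lo..hi}) = Suc hi - lo"
    by (subst card_image) (auto simp: inj_on_def)
  moreover have "real (Suc hi) - real lo \<le> real (Suc hi - lo)"
    by (cases "lo \<le> Suc hi") (auto simp: of_nat_diff)
  ultimately have "real (Suc hi) - real lo \<le> real (card (Lambda \<inter> {x..x+a}))"
    by (metis of_nat_mono order_trans)
  moreover have "(x + a)\<^sup>2 - 1 < real hi" "real lo < x\<^sup>2 + 1"
    unfolding lo_def hi_def by (simp_all add: of_nat_nat) linarith+
  moreover have "(x + a)\<^sup>2 = x\<^sup>2 + 2 * a * x + a\<^sup>2"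
    by (simp add: power2_eq_square algebra_simps)
  ultimately show ?thesis
    using zero_le_power2[of a] by linarith
qed

lemma asymp_dense_Lambda: "asymp_dense Lambda"
  unfolding asymp_dense_def
proof (intro conjI allI impI)
  have "infinite sqrt_nats"
    unfolding sqrt_nats_def by (rule range_inj_infinite) (simp add: inj_def)
  then show "infinite Lambda"
    unfolding Lambda_def by auto
  show "\<not> bdd_above Lambda"
  proof
    assume "bdd_above Lambda"
    then obtain B where B: "\<And>l. l \<in> Lambda \<Longrightarrow> l \<le> B"
      by (auto simp: bdd_above_def)
    have "sqrt (real (nat \<lceil>B\<^sup>2\<rceil> + 1)) \<in> Lambda"
      unfolding Lambda_def sqrt_nats_def by blast
    then have "sqrt (real (nat \<lceil>B\<^sup>2\<rceil> + 1)) \<le> B"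
      by (rule B)
    moreover have "B\<^sup>2 < real (nat \<lceil>B\<^sup>2\<rceil> + 1)"
      by linarith
    ultimately show False
      using real_less_rsqrt[of "\<bar>B\<bar>"] by force
  qed
  fix a :: real assume "0 < a"
  show "filterlim (\<lambda>x. card (Lambda \<inter> {x..x + a})) at_top at_top"
    unfolding filterlim_at_top
  proof
    fix Z :: nat
    show "\<forall>\<^sub>F x in at_top. Z \<le> card (Lambda \<inter> {x..x + a})"
      using eventually_ge_at_top[of "(real Z + 1) / (2 * a)"]
    proof eventually_elim
      case (elim x)
      have "0 \<le> (real Z + 1) / (2 * a)"
        using \<open>0 < a\<close> by simp
      then have "0 \<le> x"
        using elim by linarith
      have "real Z + 1 \<le> x * (2 * a)"
        using elim \<open>0 < a\<close> by (simp add: pos_divide_le_eq)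
      then have "real Z + 1 \<le> 2 * a * x"
        by (simp add: mult.commute)
      then show ?case
        using card_Lambda_Int_ge[OF \<open>0 \<le> x\<close> \<open>0 < a\<close>] by linarith
    qed
  qed
qed

locale bump_profile =
  fixes \<phi> :: "real \<Rightarrow> real"
  assumes nonneg: "0 \<le> \<phi> t"
    and le_one: "\<phi> t \<le> 1"
    and lipschitz: "\<bar>\<phi> s - \<phi> t\<bar> \<le> \<bar>s - t\<bar>"
begin

lemma bump_nonneg: "0 \<le> bump \<phi> m y"
  unfolding bump_def using height_nonneg nonneg plateau_bounds by simp

lemma bump_le_height: "bump \<phi> m y \<le> height m"
proof -
  have "\<phi> (y - anchor m) * plateau m (y - anchor m) \<le> 1"
    using nonneg le_one plateau_bounds by (simp add: mult_le_one)
  then show ?thesis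
    unfolding bump_def using height_nonneg[of m] by (metis mult.assoc mult_left_le)
qed

lemma bump_sum_nonneg: "0 \<le> bump_sum \<phi> y"
  unfolding bump_sum_def by (intro sum_nonneg) (simp add: bump_nonneg)

lemma bump_sum_eq_bump:
  assumes "\<bar>y - anchor m\<bar> \<le> real m + 1"
  shows "bump_sum \<phi> y = bump \<phi> m y"
proof -
  define N where "N = max (m + 1) (nat \<lfloor>y\<rfloor> + 1)"
  have "bump_sum \<phi> y = (\<Sum>m<N. bump \<phi> m y)"
    by (rule bump_sum_eq) (simp add: N_def, linarith)
  also have "\<dots> = (\<Sum>m'\<in>{m}. bump \<phi> m' y)"
  proof (rule sum.mono_neutral_right)
    show "\<forall>i\<in>{..<N} - {m}. bump \<phi> i y = 0"
      using anchor_separated[of m] assms by (force intro: bump_eq_0)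
  qed (auto simp: N_def)
  finally show ?thesis
    by simp
qed

lemma bump_le_decay:
  assumes "0 < y"
  shows "bump \<phi> m y \<le> (1/2) ^ m / y ^ 4"
proof (cases "bump \<phi> m y = 0")
  case False
  then have "y \<le> 2 * anchor m"
    using bump_eq_0[of m y] anchor_ge[of m] by force
  then have "(1/2) ^ m / (2 * anchor m) ^ 4 \<le> (1/2) ^ m / y ^ 4"
    using assms by (intro divide_left_mono power_mono mult_pos_pos) auto
  then show ?thesis
    using bump_le_height[of m y] height_le[of m] by linarith
qed (use assms in simp)

lemma bump_sum_le_decay:
  assumes "0 < y"
  shows "bump_sum \<phi> y \<le> 2 / y ^ 4"
proof -
  define N where "N = nat \<lfloor>y\<rfloor> + 1"
  have "bump_sum \<phi> y \<le> (\<Sum>m<N. (1/2) ^ m / y ^ 4)"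
    unfolding bump_sum_def N_def by (intro sum_mono bump_le_decay assms)
  also have "\<dots> = (\<Sum>m<N. (1/2::real) ^ m) / y ^ 4"
    by (simp add: sum_divide_distrib)
  also have "\<dots> \<le> 2 / y ^ 4"
    using assms by (intro divide_right_mono) (simp_all add: sum_gp_strict)
  finally show ?thesis .
qed

lemma bump_sum_in_C0_plus: "bump_sum \<phi> \<in> C0_plus"
proof -
  have "continuous_on UNIV \<phi>"
    using lipschitz by (intro lipschitz_on_continuous_on[of 1] lipschitz_onI) (auto simp: dist_real_def)
  moreover have "(bump_sum \<phi> \<longlongrightarrow> 0) at_top"
  proof (rule tendsto_sandwich[of "\<lambda>_. 0" _ _ "\<lambda>y. 2 / y ^ 4"])
    show "\<forall>\<^sub>F y in at_top. bump_sum \<phi> y \<le> 2 / y ^ 4"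
      using eventually_gt_at_top[of "0::real"] by eventually_elim (rule bump_sum_le_decay)
    show "((\<lambda>y::real. 2 / y ^ 4) \<longlongrightarrow> 0) at_top"
      by real_asymp
  qed (simp_all add: bump_sum_nonneg)
  ultimately show ?thesis
    unfolding C0_plus_def using continuous_on_bump_sum bump_sum_nonneg by blast
qed

lemma bump_sum_on_cluster:
  assumes "\<bar>x\<bar> \<le> real m" "l \<in> cluster m"
  obtains e where "0 \<le> e" "e < 1 / real (cluster_size m)"
    "bump_sum \<phi> (x + l) = height m * \<phi> (x + e) * plateau m (x + e)"
proof
  let ?e = "l - anchor m"
  show "0 \<le> ?e" "?e < 1 / real (cluster_size m)"
    using cluster_bounds[OF assms(2)] by auto
  moreover have "1 / real (cluster_size m) \<le> 1"
    using cluster_bounds(1)[OF assms(2)] by simp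
  ultimately have "\<bar>x + l - anchor m\<bar> \<le> real m + 1"
    using assms(1) by linarith
  then show "bump_sum \<phi> (x + l) = height m * \<phi> (x + ?e) * plateau m (x + ?e)"
    by (simp add: bump_sum_eq_bump bump_def algebra_simps)
qed

lemma cluster_sum_le:
  assumes "\<phi> x = 0" "\<bar>x\<bar> \<le> real m"
  shows "(\<Sum>l\<in>cluster m. bump_sum \<phi> (x + l)) \<le> height m"
proof -
  have "bump_sum \<phi> (x + l) \<le> height m / real (cluster_size m)" if l: "l \<in> cluster m" for l
  proof -
    obtain e where e: "0 \<le> e" "e < 1 / real (cluster_size m)"
      and eq: "bump_sum \<phi> (x + l) = height m * \<phi> (x + e) * plateau m (x + e)"
      using bump_sum_on_cluster[OF assms(2) l] .
    have "\<phi> (x + e) \<le> e"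
      using lipschitz[of "x + e" x] assms(1) e by simp
    moreover have "\<phi> (x + e) * plateau m (x + e) \<le> \<phi> (x + e)"
      using nonneg plateau_bounds by (simp add: mult_left_le)
    ultimately have "\<phi> (x + e) * plateau m (x + e) \<le> 1 / real (cluster_size m)"
      using e by linarith
    then have "height m * (\<phi> (x + e) * plateau m (x + e)) \<le> height m * (1 / real (cluster_size m))"
      using height_nonneg by (rule mult_left_mono)
    then show ?thesis
      unfolding eq by simp
  qed
  then have "(\<Sum>l\<in>cluster m. bump_sum \<phi> (x + l)) \<le> real (card (cluster m)) * (height m / real (cluster_size m))"
    by (rule sum_bounded_above)
  also have "\<dots> \<le> height m"
    by (simp add: card_cluster height_nonneg)
  finally show ?thesis .
qed

lemma cluster_sum_ge:
  assumes "\<bar>x\<bar> + 1 \<le> real m"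
  shows "real m * \<phi> x - 1 \<le> (\<Sum>l\<in>cluster m. bump_sum \<phi> (x + l))"
proof -
  have m: "1 \<le> m"
    using assms by linarith
  have "height m * (\<phi> x - 1 / real (cluster_size m)) \<le> bump_sum \<phi> (x + l)" if l: "l \<in> cluster m" for l
  proof -
    have "\<bar>x\<bar> \<le> real m"
      using assms by linarith
    then obtain e where e: "0 \<le> e" "e < 1 / real (cluster_size m)"
      and eq: "bump_sum \<phi> (x + l) = height m * \<phi> (x + e) * plateau m (x + e)"
      using bump_sum_on_cluster l by blast
    have "1 / real (cluster_size m) \<le> 1"
      using cluster_size_ge[of m] m by simp
    then have "\<bar>x + e\<bar> \<le> real m"
      using e assms by linarith
    then have "plateau m (x + e) = 1"
      by (simp add: plateau_def)
    moreover have "\<phi> x - 1 / real (cluster_size m) \<le> \<phi> (x + e)"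
      using lipschitz[of "x + e" x] e by linarith
    ultimately show ?thesis
      unfolding eq using height_nonneg[of m] by (simp add: mult_left_mono)
  qed
  then have "real (card (cluster m)) * (height m * (\<phi> x - 1 / real (cluster_size m)))
      \<le> (\<Sum>l\<in>cluster m. bump_sum \<phi> (x + l))"
    by (rule sum_bounded_below)
  moreover have "real (card (cluster m)) * (height m * (\<phi> x - 1 / real (cluster_size m)))
      = real m * \<phi> x - height m"
    using height_times_cluster_size[OF m] cluster_size_ge[of m] m
    by (simp add: card_cluster field_simps)
  moreover have "height m \<le> 1"
    using height_le_geometric[of m] by (simp add: power_le_one order_trans)
  ultimately show ?thesis
    by linarith
qed

lemma shift_sum_eq_top:
  assumes "0 < \<phi> x"
  shows "shift_sum (bump_sum \<phi>) Lambda x = top"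
  unfolding shift_sum_def
proof (rule infsum_ennreal_eq_topI)
  fix B :: real
  define m where "m = nat \<lceil>\<bar>x\<bar> + 1 + \<bar>B + 1\<bar> / \<phi> x\<rceil>"
  have "\<bar>x\<bar> + 1 + \<bar>B + 1\<bar> / \<phi> x \<le> real m"
    unfolding m_def by (rule real_nat_ceiling_ge)
  moreover have "0 \<le> \<bar>B + 1\<bar> / \<phi> x"
    using assms by simp
  ultimately have "\<bar>x\<bar> + 1 \<le> real m" "\<bar>B + 1\<bar> / \<phi> x \<le> real m"
    by linarith+
  then have "B \<le> (\<Sum>l\<in>cluster m. bump_sum \<phi> (x + l))"
    using cluster_sum_ge[of x m] assms by (simp add: divide_le_eq)
  then show "\<exists>F. finite F \<and> F \<subseteq> Lambda \<and> B \<le> (\<Sum>l\<in>F. bump_sum \<phi> (x + l))"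
    by (intro exI[of _ "cluster m"]) (auto simp: finite_cluster Lambda_def)
qed (rule bump_sum_nonneg)

lemma summable_on_sqrt_nats:
  "(\<lambda>l. bump_sum \<phi> (x + l)) summable_on sqrt_nats"
proof -
  have "summable (\<lambda>k. 32 * inverse (real k ^ 2))"
    by (intro summable_mult inverse_power_summable) auto
  moreover have "norm (bump_sum \<phi> (x + sqrt (real k))) \<le> 32 * inverse (real k ^ 2)"
    if "nat \<lceil>4 * x\<^sup>2\<rceil> + 1 \<le> k" for k
  proof -
    have "4 * x\<^sup>2 < real k"
      using that by linarith
    then have "2 * \<bar>x\<bar> < sqrt (real k)"
      using real_less_rsqrt[of "2 * \<bar>x\<bar>"] by (simp add: power_mult_distrib)
    then have y: "sqrt (real k) / 2 \<le> x + sqrt (real k)" "0 < sqrt (real k) / 2"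
      by linarith+
    then have "0 < x + sqrt (real k)"
      by linarith
    then have "bump_sum \<phi> (x + sqrt (real k)) \<le> 2 / (x + sqrt (real k)) ^ 4"
      by (rule bump_sum_le_decay)
    also have "\<dots> \<le> 2 / (sqrt (real k) / 2) ^ 4"
      using y \<open>0 < x + sqrt (real k)\<close> by (intro divide_left_mono power_mono mult_pos_pos) auto
    also have "\<dots> = 32 * inverse (real k ^ 2)"
      using power_mult[of "sqrt (real k)" 2 2] by (simp add: field_simps power_divide)
    finally show ?thesis
      using bump_sum_nonneg by simp
  qed
  ultimately have "summable (\<lambda>k. bump_sum \<phi> (x + sqrt (real k)))"
    by (rule summable_comparison_test')
  then have "(\<lambda>k. bump_sum \<phi> (x + sqrt (real k))) summable_on UNIV"
    by (simp add: summable_on_UNIV_nonneg_real_iff bump_sum_nonneg)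
  then show ?thesis
    unfolding sqrt_nats_def by (subst summable_on_reindex) (auto simp: inj_on_def o_def)
qed

lemma summable_on_clusters:
  assumes "\<phi> x = 0"
  shows "(\<lambda>l. bump_sum \<phi> (x + l)) summable_on (\<Union>m. cluster m)"
proof -
  let ?g = "\<lambda>m. \<Sum>l\<in>cluster m. bump_sum \<phi> (x + l)"
  have "summable ?g"
  proof (rule summable_comparison_test')
    show "norm (?g m) \<le> (1/2) ^ m" if "nat \<lceil>\<bar>x\<bar>\<rceil> \<le> m" for m
      using cluster_sum_le[OF assms, of m] height_le_geometric[of m] that
      by (simp add: bump_sum_nonneg sum_nonneg)
  qed simp
  then have "?g summable_on UNIV"
    by (simp add: summable_on_UNIV_nonneg_real_iff bump_sum_nonneg sum_nonneg)
  then show ?thesis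
    by (rule summable_on_UnionI[rotated])
      (simp_all add: finite_cluster bump_sum_nonneg disjoint_family_cluster)
qed

lemma shift_sum_neq_top:
  assumes "\<phi> x = 0"
  shows "shift_sum (bump_sum \<phi>) Lambda x \<noteq> top"
  unfolding shift_sum_def Lambda_def
  by (intro infsum_ennreal_neq_topI summable_on_union summable_on_sqrt_nats summable_on_clusters assms)
    (rule bump_sum_nonneg)

lemma divset_bump_sum: "divset (bump_sum \<phi>) Lambda = {x. 0 < \<phi> x}"
  unfolding divset_def using shift_sum_eq_top shift_sum_neq_top nonneg
  by (force simp: order_le_less)

end

(* The case split is needed because infdist t {} = 0. *)
definition capped_dist :: "real set \<Rightarrow> real \<Rightarrow> real" where
  "capped_dist G t = (if G = UNIV then 1 else min 1 (infdist t (- G)))"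

interpretation capped_dist: bump_profile "capped_dist G"
proof
  fix s t
  show "0 \<le> capped_dist G t" "capped_dist G t \<le> 1"
    by (auto simp: capped_dist_def infdist_nonneg)
  have "\<bar>infdist s (- G) - infdist t (- G)\<bar> \<le> dist s t"
    by (rule infdist_triangle_abs)
  then have "\<bar>min 1 (infdist s (- G)) - min 1 (infdist t (- G))\<bar> \<le> \<bar>s - t\<bar>"
    by (simp add: dist_real_def)
  then show "\<bar>capped_dist G s - capped_dist G t\<bar> \<le> \<bar>s - t\<bar>"
    by (cases "G = UNIV") (simp_all add: capped_dist_def)
qed

lemma capped_dist_pos_iff:
  assumes "open G"
  shows "0 < capped_dist G t \<longleftrightarrow> t \<in> G"
proof (cases "G = UNIV")
  case False
  then have "0 < infdist t (- G) \<longleftrightarrow> t \<in> G"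
    using assms infdist_pos_not_in_closed[of "- G" t] infdist_zero[of t "- G"]
    by (cases "t \<in> G") (auto simp: closed_Compl)
  then show ?thesis
    using False by (simp add: capped_dist_def)
qed (simp add: capped_dist_def)

theorem theorem3p1:
  shows "\<exists>L. discrete_nonneg_set L \<and> asymp_dense L \<and>
           (\<forall>G. open G \<longrightarrow> (\<exists>f\<in>C0_plus. divset f L = G))"
proof (intro exI conjI allI impI)
  show "discrete_nonneg_set Lambda"
    by (rule discrete_Lambda)
  show "asymp_dense Lambda"
    by (rule asymp_dense_Lambda)
  fix G :: "real set"
  assume "open G"
  then have "divset (bump_sum (capped_dist G)) Lambda = G"
    using capped_dist.divset_bump_sum capped_dist_pos_iff by auto
  then show "\<exists>f\<in>C0_plus. divset f Lambda = G"
    using capped_dist.bump_sum_in_C0_plus by blast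
qed

end
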